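(* Let $X_1,\dots,X_n$ be i.i.d. from a Gaussian location mixture $\nu*N(0,\sigma^2)$ whose distribution has a density, and assume $n>k$. For $j\ge1$ let $\hat\gamma_j=\frac1n\sum_{i=1}^nX_i^j$, $\hat\gamma_0=1$, and for $r\ge0$ and $\sigma'\ge 0$ let $\hat m_r(\sigma')=r!\sum_{i=0}^{\lfloor r/2\rfloor}\frac{(-1/2)^i}{i!(r-2i)!}\hat\gamma_{r-2i}\sigma'^{2i}$. Let $\hat d_k(\sigma')=\det\big(\hat m_{i+j}(\sigma')\big)_{i,j=0}^k$. Then, almost surely, $\hat d_k$ has a positive root in $(0,s]$, where $s^2=\frac1n\sum_{i=1}^n(X_i-\hat\gamma_1)^2$ is the sample variance. *)

theory Defs
  imports "HOL-Probability.Probability"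
begin

definition gauss :: "real \<Rightarrow> real measure" where
  "gauss \<sigma> = (if \<sigma> = 0 then return borel 0 else density lborel (\<lambda>x. ennreal (normal_density 0 \<sigma> x)))"

definition gauss_mixture :: "real measure \<Rightarrow> real \<Rightarrow> real measure" where
  "gauss_mixture \<nu> \<sigma> = convolution \<nu> (gauss \<sigma>)"

definition det_sq :: "nat \<Rightarrow> (nat \<Rightarrow> nat \<Rightarrow> real) \<Rightarrow> real" where
  "det_sq N A = (\<Sum>p | p permutes {..N}. of_int (sign p) * (\<Prod>i\<le>N. A i (p i)))"

definition emp_moment :: "nat \<Rightarrow> (nat \<Rightarrow> real) \<Rightarrow> nat \<Rightarrow> real" where
  "emp_moment n x j = (if j = 0 then 1 else (1 / real n) * (\<Sum>i<n. x i ^ j))"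

definition m_hat :: "nat \<Rightarrow> (nat \<Rightarrow> real) \<Rightarrow> nat \<Rightarrow> real \<Rightarrow> real" where
  "m_hat n x r s' = fact r * (\<Sum>i = 0..r div 2.
      (-1/2) ^ i / (fact i * fact (r - 2*i)) * emp_moment n x (r - 2*i) * s' ^ (2*i))"

definition d_hat :: "nat \<Rightarrow> (nat \<Rightarrow> real) \<Rightarrow> nat \<Rightarrow> real \<Rightarrow> real" where
  "d_hat n x k s' = det_sq k (\<lambda>i j. m_hat n x (i + j) s')"

definition sample_sd :: "nat \<Rightarrow> (nat \<Rightarrow> real) \<Rightarrow> real" where
  "sample_sd n x = sqrt ((1 / real n) * (\<Sum>i<n. (x i - emp_moment n x 1)\<^sup>2))"

end

theory Submission
  imports Defs "Jordan_Normal_Form.Determinant" "HOL-Computational_Algebra.Polynomial"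
begin

text \<open>
  Let \<open>M(\<sigma>)\<close> be the Hankel matrix \<open>(m_hat (i + j) \<sigma>)\<close>, \<open>i, j \<le> k\<close>. At \<open>\<sigma> = 0\<close> it is the
  moment matrix of the empirical distribution: \<open>v\<^sup>T M(0) v\<close> is the sample mean of \<open>p\<^sub>v(X\<^sub>i)\<^sup>2\<close>,
  where \<open>p\<^sub>v\<close> is the polynomial of degree \<open>\<le> k\<close> with coefficients \<open>v\<close>. If the \<open>n > k\<close> sample
  points are distinct, \<open>p\<^sub>v\<close> cannot vanish at all of them, so \<open>M(0)\<close> is positive definite.
  At \<open>\<sigma> = s\<close> the vector \<open>(-\<gamma>\<^sub>1, 1, 0, \<dots>, 0)\<close> is isotropic, since \<open>m_hat 2 s = \<gamma>\<^sub>2 - s\<^sup>2 = \<gamma>\<^sub>1\<^sup>2\<close>.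
  By compactness of the unit sphere there is a first \<open>t \<in> (0, s]\<close> at which \<open>M(t)\<close> has a
  nonzero isotropic vector; \<open>M(t)\<close> is still positive semidefinite, so that vector lies in
  its kernel and \<open>det M(t) = 0\<close>. Finally, independent draws from an atomless distribution
  are almost surely pairwise distinct.
\<close>

section \<open>Quadratic forms and determinants\<close>

definition quad_form :: "nat \<Rightarrow> (nat \<Rightarrow> nat \<Rightarrow> real) \<Rightarrow> (nat \<Rightarrow> real) \<Rightarrow> real" where
  "quad_form k A v = (\<Sum>i\<le>k. \<Sum>j\<le>k. v i * A i j * v j)"

lemma quad_form_cong: "(\<And>i. i \<le> k \<Longrightarrow> v i = w i) \<Longrightarrow> quad_form k A v = quad_form k A w"
  unfolding quad_form_def by (intro sum.cong refl) auto

lemma quad_form_scale: "quad_form k A (\<lambda>i. c * v i) = c\<^sup>2 * quad_form k A v"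
  unfolding quad_form_def by (simp add: sum_distrib_left power2_eq_square algebra_simps)

lemma quad_form_supported_01:
  assumes "1 \<le> k"
  shows "quad_form k A (\<lambda>i. if i = 0 then a else if i = 1 then b else 0)
    = a\<^sup>2 * A 0 0 + a * b * (A 0 1 + A 1 0) + b\<^sup>2 * A 1 1"
proof -
  define w :: "nat \<Rightarrow> real" where "w = (\<lambda>i. if i = 0 then a else if i = 1 then b else 0)"
  have "{0, 1} \<subseteq> {..k}"
    using assms by auto
  then have "quad_form k A w = (\<Sum>i\<in>{0, 1}. \<Sum>j\<in>{0, 1}. w i * A i j * w j)"
    unfolding quad_form_def
    by (intro sum.mono_neutral_cong_right sum.mono_neutral_right) (auto simp: w_def)
  then show ?thesis
    by (simp add: w_def power2_eq_square algebra_simps)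
qed

lemma quad_form_add_unit_vector:
  assumes sym: "\<And>i j. A i j = A j i" and i: "i \<le> k"
  shows "quad_form k A (\<lambda>l. v l + (if l = i then x else 0)) =
    quad_form k A v + 2 * x * (\<Sum>j\<le>k. A i j * v j) + x\<^sup>2 * A i i"
proof -
  define e where "e l = (if l = i then x else 0)" for l
  have "quad_form k A (\<lambda>l. v l + e l) = quad_form k A v
      + (\<Sum>l\<le>k. \<Sum>m\<le>k. e l * A l m * v m) + (\<Sum>l\<le>k. \<Sum>m\<le>k. v l * A l m * e m)
      + quad_form k A e"
    by (simp add: quad_form_def algebra_simps sum.distrib)
  also have "(\<Sum>l\<le>k. \<Sum>m\<le>k. v l * A l m * e m) = (\<Sum>l\<le>k. \<Sum>m\<le>k. e l * A l m * v m)"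
    by (subst sum.swap) (simp add: sym mult_ac)
  also have "(\<Sum>l\<le>k. \<Sum>m\<le>k. e l * A l m * v m) = (\<Sum>l\<le>k. e l * (\<Sum>m\<le>k. A l m * v m))"
    by (simp add: sum_distrib_left mult.assoc)
  also have "\<dots> = x * (\<Sum>j\<le>k. A i j * v j)"
    using i by (simp add: e_def if_distrib[of "\<lambda>a. a * _"] cong: if_cong)
  also have "quad_form k A e = x\<^sup>2 * A i i"
    using i by (simp add: quad_form_def e_def power2_eq_square
        if_distrib[of "\<lambda>a. a * _"] if_distrib[of "\<lambda>a. _ * a"] cong: if_cong)
  finally show ?thesis
    by (simp add: e_def)
qed

lemma quad_form_psd_kernel:
  assumes sym: "\<And>i j. A i j = A j i" and psd: "\<And>w. 0 \<le> quad_form k A w"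
    and iso: "quad_form k A v = 0" and i: "i \<le> k"
  shows "(\<Sum>j\<le>k. A i j * v j) = 0"
proof -
  define c where "c = (\<Sum>j\<le>k. A i j * v j)"
  define a where "a = A i i"
  have expand: "quad_form k A (\<lambda>l. v l + (if l = i then x else 0)) = 2 * x * c + x\<^sup>2 * a" for x
    using quad_form_add_unit_vector[of A i k v, OF sym i] iso by (simp add: c_def a_def)
  have "0 \<le> quad_form k A (\<lambda>l. 0 + (if l = i then 1 else 0))"
    by (rule psd)
  then have "0 \<le> a"
    unfolding quad_form_add_unit_vector[of A i k "\<lambda>_. 0" 1, OF sym i]
    by (simp add: a_def quad_form_def)
  \<comment> \<open>Testing with \<open>x = -c/(a+1)\<close> rather than \<open>-c/a\<close> avoids a case split on \<open>a = 0\<close>.\<close>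
  define x where "x = - c / (a + 1)"
  have "2 * x * c + x\<^sup>2 * a = - (c\<^sup>2 * (a + 2)) / (a + 1)\<^sup>2"
    using \<open>0 \<le> a\<close> by (simp add: x_def field_simps power2_eq_square add_nonneg_eq_0_iff)
  moreover have "0 \<le> 2 * x * c + x\<^sup>2 * a"
    using psd expand by metis
  ultimately have "c\<^sup>2 * (a + 2) \<le> 0"
    using \<open>0 \<le> a\<close> by (simp add: divide_le_0_iff)
  then show ?thesis
    using \<open>0 \<le> a\<close> by (simp add: c_def[symmetric] mult_le_0_iff)
qed

lemma det_sq_eq_det: "det_sq k A = det (mat (Suc k) (Suc k) (\<lambda>(i, j). A i j))"
proof -
  have "{0..<Suc k} = {..k}" by auto
  then show ?thesis unfolding det_sq_def det_def by simp
qed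

lemma det_sq_eq_0_if_kernel:
  assumes ker: "\<And>i. i \<le> k \<Longrightarrow> (\<Sum>j\<le>k. A i j * v j) = 0" and j: "j \<le> k" "v j \<noteq> 0"
  shows "det_sq k A = 0"
proof -
  let ?M = "mat (Suc k) (Suc k) (\<lambda>(i, j). A i j)"
  let ?v = "vec (Suc k) v"
  have "?v \<noteq> 0\<^sub>v (Suc k)"
    using j by (metis index_vec index_zero_vec(1) less_Suc_eq_le)
  moreover have "?M *\<^sub>v ?v = 0\<^sub>v (Suc k)"
    using ker by (intro eq_vecI) (auto simp: scalar_prod_def atLeast0LessThan lessThan_Suc_atMost)
  ultimately show ?thesis
    unfolding det_sq_eq_det by (meson det_0_iff_vec_prod_zero mat_carrier vec_carrier)
qed

text \<open>Vectors are functions vanishing beyond \<open>k\<close>, so that the unit sphere is compact in the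
  product topology on \<open>nat \<Rightarrow> real\<close>.\<close>

definition unit_sphere_upto :: "nat \<Rightarrow> (nat \<Rightarrow> real) set" where
  "unit_sphere_upto k = {v. (\<forall>i>k. v i = 0) \<and> (\<Sum>i\<le>k. (v i)\<^sup>2) = 1}"

lemma compact_unit_sphere_upto: "compact (unit_sphere_upto k)"
proof -
  let ?B = "\<lambda>i::nat. if i \<le> k then {-1..1::real} else {0}"
  have "compactin (product_topology (\<lambda>_. euclidean) UNIV) (Pi\<^sub>E UNIV ?B)"
    by (subst compactin_PiE) auto
  then have "compact (Pi\<^sub>E UNIV ?B)"
    by (simp add: euclidean_product_topology)
  moreover have "closed (unit_sphere_upto k)"
    unfolding unit_sphere_upto_def
    by (intro closed_Collect_conj closed_Collect_all closed_Collect_imp closed_Collect_eq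
        continuous_intros continuous_on_compose2[OF continuous_on_product_coordinates]) auto
  moreover have "unit_sphere_upto k \<subseteq> Pi\<^sub>E UNIV ?B"
  proof
    fix v assume v: "v \<in> unit_sphere_upto k"
    have "(v i)\<^sup>2 \<le> 1" if "i \<le> k" for i
      using v member_le_sum[of i "{..k}" "\<lambda>i. (v i)\<^sup>2"] that by (auto simp: unit_sphere_upto_def)
    then show "v \<in> Pi\<^sub>E UNIV ?B"
      using v by (auto simp: unit_sphere_upto_def abs_square_le_1 abs_le_iff)
  qed
  ultimately show ?thesis
    by (metis compact_Int_closed inf.absorb_iff2)
qed

lemma unit_sphere_upto_nonzero:
  assumes "v \<in> unit_sphere_upto k"
  obtains j where "j \<le> k" "v j \<noteq> 0"
proof -
  have "\<exists>j\<le>k. v j \<noteq> 0"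
  proof (rule ccontr)
    assume "\<not> (\<exists>j\<le>k. v j \<noteq> 0)"
    then have "(\<Sum>i\<le>k. (v i)\<^sup>2) = 0"
      by simp
    then show False
      using assms by (simp add: unit_sphere_upto_def)
  qed
  then show ?thesis
    using that by blast
qed

lemma nonzero_eq_scaled_unit_sphere_upto:
  assumes "j \<le> k" "v j \<noteq> 0"
  obtains c w where "0 < c" "w \<in> unit_sphere_upto k" "\<And>i. i \<le> k \<Longrightarrow> v i = c * w i"
proof -
  define S where "S = (\<Sum>i\<le>k. (v i)\<^sup>2)"
  have "0 < S"
    unfolding S_def using assms by (intro sum_pos2[of _ j]) auto
  define c where "c = sqrt S"
  define w where "w i = (if i \<le> k then v i / c else 0)" for i
  have "0 < c"
    using \<open>0 < S\<close> by (simp add: c_def)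
  moreover have "(\<Sum>i\<le>k. (w i)\<^sup>2) = S / c\<^sup>2"
    by (simp add: w_def S_def power_divide sum_divide_distrib)
  then have "w \<in> unit_sphere_upto k"
    using \<open>0 < S\<close> by (simp add: unit_sphere_upto_def w_def c_def)
  moreover have "v i = c * w i" if "i \<le> k" for i
    using \<open>0 < c\<close> that by (simp add: w_def)
  ultimately show ?thesis
    using that by blast
qed

lemma quad_form_nonneg_if_nonneg_on_unit_sphere_upto:
  assumes "\<And>w. w \<in> unit_sphere_upto k \<Longrightarrow> 0 \<le> quad_form k A w"
  shows "0 \<le> quad_form k A v"
proof (cases "\<forall>j\<le>k. v j = 0")
  case True
  then have "quad_form k A v = quad_form k A (\<lambda>_. 0)"
    by (intro quad_form_cong) auto
  then show ?thesis
    by (simp add: quad_form_def)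
next
  case False
  then obtain c w where "w \<in> unit_sphere_upto k" "\<And>i. i \<le> k \<Longrightarrow> v i = c * w i"
    using nonzero_eq_scaled_unit_sphere_upto by (metis not_le_imp_less)
  then show ?thesis
    using assms quad_form_cong[of k v "\<lambda>i. c * w i" A] by (simp add: quad_form_scale)
qed

lemma first_nonpositive_level:
  fixes Q :: "real \<Rightarrow> 'b::topological_space \<Rightarrow> real"
  assumes K: "compact K" and cont: "continuous_on UNIV (\<lambda>p. Q (fst p) (snd p))"
    and pos: "\<And>v. v \<in> K \<Longrightarrow> 0 < Q a v" and u: "u \<in> K" "Q b u \<le> 0" and "a \<le> b"
  obtains t w where "a < t" "t \<le> b" "w \<in> K" "Q t w \<le> 0" "\<And>v. v \<in> K \<Longrightarrow> 0 \<le> Q t v"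
proof -
  define C where "C = ({a..b} \<times> K) \<inter> {p. Q (fst p) (snd p) \<le> 0}"
  have "compact (fst ` C)"
    unfolding C_def using K cont
    by (intro compact_continuous_image continuous_on_fst continuous_on_id
        compact_Int_closed compact_Times compact_Icc closed_Collect_le continuous_on_const)
  moreover have "b \<in> fst ` C"
    using u \<open>a \<le> b\<close> by (force simp: C_def)
  ultimately obtain t where t: "t \<in> fst ` C" and least: "\<And>s. s \<in> fst ` C \<Longrightarrow> t \<le> s"
    using compact_attains_inf[of "fst ` C"] by blast
  then obtain w where w: "w \<in> K" "Q t w \<le> 0" "a \<le> t" "t \<le> b"
    by (auto simp: C_def)
  have "a < t"
    using w pos[of w] by (cases "t = a") auto
  have below: "0 < Q s v" if "a \<le> s" "s < t" "v \<in> K" for s v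
  proof (rule ccontr)
    assume "\<not> 0 < Q s v"
    then have "s \<in> fst ` C"
      using that w by (force simp: C_def)
    with least[of s] \<open>s < t\<close> show False
      by simp
  qed
  have "0 \<le> Q t v" if "v \<in> K" for v
  proof -
    have "continuous_on UNIV ((\<lambda>p. Q (fst p) (snd p)) \<circ> (\<lambda>s. (s, v)))"
      by (intro continuous_on_compose continuous_intros continuous_on_subset[OF cont]) auto
    then have "isCont (\<lambda>s. Q s v) t"
      by (simp add: o_def continuous_on_eq_continuous_at)
    then have "((\<lambda>s. Q s v) \<longlongrightarrow> Q t v) (at_left t)"
      by (simp add: isCont_def filterlim_at_split)
    moreover have "eventually (\<lambda>s. 0 \<le> Q s v) (at_left t)"
      using eventually_at_left_real[OF \<open>a < t\<close>]
      by (rule eventually_mono) (auto intro: less_imp_le below that)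
    ultimately show ?thesis
      by (rule tendsto_lowerbound) simp
  qed
  then show ?thesis
    using that \<open>a < t\<close> w by blast
qed

lemma det_sq_vanishes_before_isotropic:
  fixes A :: "real \<Rightarrow> nat \<Rightarrow> nat \<Rightarrow> real"
  assumes cont: "\<And>i j. continuous_on UNIV (\<lambda>\<sigma>. A \<sigma> i j)"
    and sym: "\<And>\<sigma> i j. A \<sigma> i j = A \<sigma> j i"
    and pos_def: "\<And>v j. j \<le> k \<Longrightarrow> v j \<noteq> 0 \<Longrightarrow> 0 < quad_form k (A a) v"
    and iso: "j \<le> k" "u j \<noteq> 0" "quad_form k (A b) u \<le> 0" and "a \<le> b"
  shows "\<exists>t. a < t \<and> t \<le> b \<and> det_sq k (A t) = 0"
proof -
  define Q where "Q \<sigma> v = quad_form k (A \<sigma>) v" for \<sigma> v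
  have "continuous_on UNIV (\<lambda>p. Q (fst p) (snd p))"
    unfolding Q_def quad_form_def
    by (intro continuous_intros continuous_on_compose2[OF cont]
        continuous_on_compose2[OF continuous_on_product_coordinates]) auto
  moreover have "0 < Q a v" if "v \<in> unit_sphere_upto k" for v
    using unit_sphere_upto_nonzero[OF that] pos_def Q_def by metis
  moreover obtain c w where "0 < c" "w \<in> unit_sphere_upto k" "\<And>i. i \<le> k \<Longrightarrow> u i = c * w i"
    using nonzero_eq_scaled_unit_sphere_upto[of j k u, OF iso(1,2)] by blast
  moreover from this have "Q b w \<le> 0"
    using iso(3) quad_form_cong[of k u "\<lambda>i. c * w i"] by (simp add: Q_def quad_form_scale mult_le_0_iff)
  ultimately obtain t w where t: "a < t" "t \<le> b" "w \<in> unit_sphere_upto k" "Q t w \<le> 0"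
    and psd: "\<And>v. v \<in> unit_sphere_upto k \<Longrightarrow> 0 \<le> Q t v"
    using first_nonpositive_level[OF compact_unit_sphere_upto, where Q = Q and a = a and u = w and b = b]
      \<open>a \<le> b\<close> by blast
  have psd_all: "0 \<le> quad_form k (A t) v" for v
    using quad_form_nonneg_if_nonneg_on_unit_sphere_upto psd by (simp add: Q_def)
  then have "quad_form k (A t) w = 0"
    using t(4) by (simp add: Q_def eq_iff)
  then have ker: "(\<Sum>j\<le>k. A t i j * w j) = 0" if "i \<le> k" for i
    using quad_form_psd_kernel[of "A t" k w i] sym psd_all that by blast
  obtain j where "j \<le> k" "w j \<noteq> 0"
    using unit_sphere_upto_nonzero[OF t(3)] .
  then have "det_sq k (A t) = 0"
    using det_sq_eq_0_if_kernel[of k "A t" w j] ker by blast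
  with t show ?thesis
    by blast
qed

section \<open>Empirical moment matrices\<close>

lemma m_hat_at_0: "m_hat n x r 0 = emp_moment n x r"
  by (simp add: m_hat_def power_0_left if_distrib[of "\<lambda>a. _ * a"] cong: if_cong)

lemma m_hat_1: "m_hat n x 1 s = emp_moment n x 1"
  by (simp add: m_hat_def)

lemma m_hat_2: "m_hat n x 2 s = emp_moment n x 2 - s\<^sup>2"
proof -
  have "{0..(2::nat) div 2} = {0, 1}"
    by auto
  then show ?thesis
    by (simp add: m_hat_def emp_moment_def)
qed

lemma continuous_on_m_hat: "continuous_on UNIV (m_hat n x r)"
  unfolding m_hat_def by (intro continuous_intros)

lemma emp_moment_eq_mean: "0 < n \<Longrightarrow> emp_moment n x j = (\<Sum>l<n. x l ^ j) / n"
  by (simp add: emp_moment_def)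

lemma quad_form_emp_moments:
  assumes "0 < n"
  shows "quad_form k (\<lambda>i j. emp_moment n x (i + j)) v = (\<Sum>l<n. (\<Sum>i\<le>k. v i * x l ^ i)\<^sup>2) / n"
proof -
  have "quad_form k (\<lambda>i j. emp_moment n x (i + j)) v
      = (\<Sum>i\<le>k. \<Sum>j\<le>k. \<Sum>l<n. v i * x l ^ i * (v j * x l ^ j)) / n"
    using assms by (simp add: quad_form_def emp_moment_eq_mean sum_divide_distrib
        sum_distrib_left sum_distrib_right power_add mult_ac)
  also have "\<dots> = (\<Sum>l<n. \<Sum>i\<le>k. \<Sum>j\<le>k. v i * x l ^ i * (v j * x l ^ j)) / n"
    by (subst (2) sum.swap, subst sum.swap) simp
  also have "\<dots> = (\<Sum>l<n. (\<Sum>i\<le>k. v i * x l ^ i)\<^sup>2) / n"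
    by (simp add: power2_eq_square sum_product)
  finally show ?thesis .
qed

lemma quad_form_emp_moments_pos:
  assumes inj: "inj_on x {..<n}" and "k < n" and "j \<le> k" "v j \<noteq> 0"
  shows "0 < quad_form k (\<lambda>i j. emp_moment n x (i + j)) v"
proof -
  define p where "p = (\<Sum>i\<le>k. monom (v i) i)"
  have poly_p: "poly p y = (\<Sum>i\<le>k. v i * y ^ i)" for y
    by (simp add: p_def poly_sum poly_monom)
  have "coeff p j = v j"
    using \<open>j \<le> k\<close> by (simp add: p_def coeff_sum coeff_monom)
  then have "p \<noteq> 0"
    using \<open>v j \<noteq> 0\<close> by auto
  have "degree p \<le> k"
    unfolding p_def by (intro degree_sum_le) (auto intro: order.trans[OF degree_monom_le])
  have "\<not> x ` {..<n} \<subseteq> {y. poly p y = 0}"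
  proof
    assume "x ` {..<n} \<subseteq> {y. poly p y = 0}"
    then have "card (x ` {..<n}) \<le> card {y. poly p y = 0}"
      using poly_roots_finite[OF \<open>p \<noteq> 0\<close>] by (rule card_mono[rotated])
    also have "\<dots> \<le> degree p"
      using card_poly_roots_bound[OF \<open>p \<noteq> 0\<close>] .
    finally show False
      using inj \<open>degree p \<le> k\<close> \<open>k < n\<close> by (simp add: card_image)
  qed
  then obtain l where "l < n" "poly p (x l) \<noteq> 0"
    by auto
  then have "0 < (\<Sum>l<n. (\<Sum>i\<le>k. v i * x l ^ i)\<^sup>2)"
    by (intro sum_pos2[of _ l]) (auto simp: poly_p)
  then show ?thesis
    using \<open>k < n\<close> by (simp add: quad_form_emp_moments)
qed

lemma sample_sd_squared:
  assumes "0 < n"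
  shows "(sample_sd n x)\<^sup>2 = emp_moment n x 2 - (emp_moment n x 1)\<^sup>2"
proof -
  define g where "g = emp_moment n x 1"
  have "(sample_sd n x)\<^sup>2 = (\<Sum>i<n. (x i - g)\<^sup>2) / n"
    by (simp add: sample_sd_def g_def sum_nonneg)
  also have "(\<Sum>i<n. (x i - g)\<^sup>2) = (\<Sum>i<n. (x i)\<^sup>2) - 2 * g * (\<Sum>i<n. x i) + n * g\<^sup>2"
    by (simp add: power2_diff sum.distrib sum_subtractf sum_distrib_left mult_ac)
  also have "(\<Sum>i<n. x i) = n * g"
    using assms by (simp add: g_def emp_moment_def)
  finally show ?thesis
    using assms by (simp add: g_def emp_moment_def field_simps power2_eq_square)
qed

lemma quad_form_m_hat_sample_sd_isotropic:
  assumes "0 < n" "1 \<le> k"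
  shows "quad_form k (\<lambda>i j. m_hat n x (i + j) (sample_sd n x))
      (\<lambda>i. if i = 0 then - emp_moment n x 1 else if i = 1 then 1 else 0) = 0"
proof -
  have "m_hat n x 0 s = 1" for s
    by (simp add: m_hat_def emp_moment_def)
  then show ?thesis
    unfolding quad_form_supported_01[OF assms(2)] add_0 add_0_right one_add_one m_hat_1 m_hat_2
    using sample_sd_squared[OF assms(1)] by (simp add: power2_eq_square)
qed

lemma d_hat_root_le_sample_sd:
  fixes x :: "nat \<Rightarrow> real"
  assumes "inj_on x {..<n}" "1 \<le> k" "k < n"
  shows "\<exists>t. 0 < t \<and> t \<le> sample_sd n x \<and> d_hat n x k t = 0"
  unfolding d_hat_def
proof (rule det_sq_vanishes_before_isotropic[where j = 1
      and u = "\<lambda>i. if i = 0 then - emp_moment n x 1 else if i = 1 then 1 else 0"])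
  show "continuous_on UNIV (\<lambda>\<sigma>. m_hat n x (i + j) \<sigma>)" for i j
    using continuous_on_m_hat by simp
  show "0 < quad_form k (\<lambda>i j. m_hat n x (i + j) 0) v" if "j \<le> k" "v j \<noteq> 0" for v j
    using quad_form_emp_moments_pos[of x n k j v] assms that by (simp add: m_hat_at_0)
  show "quad_form k (\<lambda>i j. m_hat n x (i + j) (sample_sd n x))
      (\<lambda>i. if i = 0 then - emp_moment n x 1 else if i = 1 then 1 else 0) \<le> 0"
    using quad_form_m_hat_sample_sd_isotropic assms by simp
  show "0 \<le> sample_sd n x"
    by (simp add: sample_sd_def sum_nonneg)
qed (use assms in \<open>simp_all add: add.commute\<close>)

section \<open>Distinctness of the sample\<close>

lemma emeasure_density_lborel_singleton: "emeasure (density lborel f) {a} = 0"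
proof -
  have "(\<integral>\<^sup>+ x. f x * indicator {a} x \<partial>lborel) = (\<integral>\<^sup>+ x. f a * indicator {a} x \<partial>lborel)"
    by (intro nn_integral_cong) (simp split: split_indicator)
  also have "\<dots> = 0"
    by (simp add: nn_integral_cmult_indicator)
  finally show ?thesis
    unfolding density_def emeasure_measure_of_conv by simp
qed

lemma (in prob_space) indep_var_of_indep_vars:
  assumes ind: "indep_vars (\<lambda>_. M') X I" and "i \<in> I" "j \<in> I" "i \<noteq> j"
  shows "indep_var M' (X i) M' (X j)"
proof -
  have "indep_var (Pi\<^sub>M {i} (\<lambda>_. M')) (\<lambda>\<omega>. restrict (\<lambda>l. X l \<omega>) {i})
      (Pi\<^sub>M {j} (\<lambda>_. M')) (\<lambda>\<omega>. restrict (\<lambda>l. X l \<omega>) {j})"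
    using assms by (intro indep_var_restrict[OF ind]) auto
  then have "indep_var M' ((\<lambda>f. f i) \<circ> (\<lambda>\<omega>. restrict (\<lambda>l. X l \<omega>) {i}))
      M' ((\<lambda>f. f j) \<circ> (\<lambda>\<omega>. restrict (\<lambda>l. X l \<omega>) {j}))"
    by (rule indep_var_compose) (auto intro: measurable_component_singleton)
  then show ?thesis
    by (simp add: o_def)
qed

lemma (in prob_space) AE_indep_var_neq:
  fixes X Y :: "'a \<Rightarrow> real"
  assumes ind: "indep_var borel X borel Y" and atomless: "\<And>a. emeasure (distr M borel Y) {a} = 0"
  shows "AE \<omega> in M. X \<omega> \<noteq> Y \<omega>"
proof -
  have rv: "random_variable borel X" "random_variable borel Y"
    and joint: "distr M borel X \<Otimes>\<^sub>M distr M borel Y = distr M (borel \<Otimes>\<^sub>M borel) (\<lambda>\<omega>. (X \<omega>, Y \<omega>))"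
    using ind indep_var_distribution_eq by auto
  interpret Y: prob_space "distr M borel Y"
    by (rule prob_space_distr[OF rv(2)])
  let ?diag = "{p :: real \<times> real. fst p = snd p}"
  have diag: "?diag \<in> sets (borel \<Otimes>\<^sub>M borel)"
    unfolding borel_prod by (intro borel_closed closed_Collect_eq continuous_intros)
  have "{\<omega> \<in> space M. X \<omega> = Y \<omega>} = (\<lambda>\<omega>. (X \<omega>, Y \<omega>)) -` ?diag \<inter> space M"
    by auto
  then have "emeasure M {\<omega> \<in> space M. X \<omega> = Y \<omega>}
      = emeasure (distr M borel X \<Otimes>\<^sub>M distr M borel Y) ?diag"
    using emeasure_distr[OF measurable_Pair[OF rv] diag] by (simp add: joint)
  also have "\<dots> = (\<integral>\<^sup>+ x. emeasure (distr M borel Y) (Pair x -` ?diag) \<partial>distr M borel X)"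
    by (rule Y.emeasure_pair_measure_alt) (simp add: diag)
  also have "\<dots> = 0"
    using atomless by (simp add: vimage_def)
  finally have "emeasure M {\<omega> \<in> space M. X \<omega> = Y \<omega>} = 0" .
  moreover have "{\<omega> \<in> space M. X \<omega> = Y \<omega>} \<in> sets M"
    using rv by measurable
  ultimately show ?thesis
    by (subst AE_iff_measurable) auto
qed

lemma (in prob_space) AE_inj_on_indep_vars:
  fixes X :: "'i \<Rightarrow> 'a \<Rightarrow> real"
  assumes ind: "indep_vars (\<lambda>_. borel) X I" and "finite I"
    and atomless: "\<And>i a. i \<in> I \<Longrightarrow> emeasure (distr M borel (X i)) {a} = 0"
  shows "AE \<omega> in M. inj_on (\<lambda>i. X i \<omega>) I"
proof -
  have "AE \<omega> in M. \<forall>p\<in>I \<times> I. fst p \<noteq> snd p \<longrightarrow> X (fst p) \<omega> \<noteq> X (snd p) \<omega>"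
  proof (intro eventually_ball_finite ballI)
    fix p assume "p \<in> I \<times> I"
    then show "AE \<omega> in M. fst p \<noteq> snd p \<longrightarrow> X (fst p) \<omega> \<noteq> X (snd p) \<omega>"
      using AE_indep_var_neq[OF indep_var_of_indep_vars[OF ind] atomless]
      by (cases "fst p = snd p") auto
  qed (use \<open>finite I\<close> in simp)
  then show ?thesis
    by (rule eventually_mono) (auto simp: inj_on_def)
qed

theorem lemma6:
  fixes M :: "'a measure" and X :: "nat \<Rightarrow> 'a \<Rightarrow> real"
    and \<nu> :: "real measure" and \<sigma> :: real and n k :: nat
  assumes "prob_space M"
    and "prob_space \<nu>" and "sets \<nu> = sets borel"
    and "\<sigma> \<ge> 0"
    and "k \<ge> 1"
    and "n > k"
    and "\<And>i. i < n \<Longrightarrow> X i \<in> borel_measurable M"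
    and "prob_space.indep_vars M (\<lambda>_. borel) X {..<n}"
    and "\<And>i. i < n \<Longrightarrow> distr M borel (X i) = gauss_mixture \<nu> \<sigma>"
    and "\<exists>f. gauss_mixture \<nu> \<sigma> = density lborel f"
  shows "AE \<omega> in M. \<exists>t. 0 < t \<and> t \<le> sample_sd n (\<lambda>i. X i \<omega>)
                         \<and> d_hat n (\<lambda>i. X i \<omega>) k t = 0"
proof -
  interpret prob_space M
    by fact
  obtain f where "gauss_mixture \<nu> \<sigma> = density lborel f"
    using assms(10) ..
  then have "AE \<omega> in M. inj_on (\<lambda>i. X i \<omega>) {..<n}"
    using assms(8,9) by (intro AE_inj_on_indep_vars) (auto simp: emeasure_density_lborel_singleton)
  then show ?thesis
    by (rule eventually_mono) (use d_hat_root_le_sample_sd assms(5,6) in blast)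
qed

end
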